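(* Let $X$, $Y$ be bigraphs and $f,g:X\to Y$ bigraph homomorphisms which are $\times$-homotopic. Then for every bigraph $Z$ the graph homomorphisms $f^*, g^*: Z^Y\to Z^X$, $h\mapsto h\circ f$ and $h\mapsto h\circ g$, are $\times$-homotopic, i.e. they lie in the same connected component of $\mathrm{Hom}(Z^Y,Z^X)$.
   Context: A graph is a set $V$ with a symmetric relation $E\subset V\times V$ (loops allowed). $K_2$ has vertices $0,1$ and edges $(0,1),(1,0)$. A bigraph is a graph $X$ with a graph homomorphism $\varepsilon_X:X\to K_2$; $V_i(X)=\varepsilon_X^{-1}(i)$; bigraph homomorphisms commute with colorings. For bigraphs $X,Y$, $Y^X$ is the graph whose vertices are maps $h:V(X)\to V(Y)$ with $\varepsilon_Y\circ h=\varepsilon_X$, with $h,h'$ adjacent iff $(h(a),h'(a'))\in E(Y)$ for all $(a,a')\in E(X)$. A multi-homomorphism $\eta$ from a graph $T$ to a graph $H$ assigns to each vertex of $T$ a finite nonempty set of vertices of $H$ with $\eta(v)\times\eta(w)\subset E(H)$ whenever $(v,w)\in E(T)$; $\mathrm{Hom}(T,H)$ is the poset of these ordered by pointwise inclusion, a homomorphism $f$ being identified with $v\mapsto\{f(v)\}$. For bigraphs, $\mathrm{Hom}_{/K_2}(X,Y)$ is the subposet of those with $\eta(v)\subset V_i(Y)$ for $v\in V_i(X)$, and bigraph homomorphisms $f,g:X\to Y$ are $\times$-homotopic if they lie in the same connected component of $\mathrm{Hom}_{/K_2}(X,Y)$. *)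

theory Defs
  imports "HOL-Library.FuncSet"
begin

record 'a graph =
  verts :: "'a set"
  edges :: "('a \<times> 'a) set"

record 'a bigraph = "'a graph" +
  col :: "'a \<Rightarrow> nat"

definition is_graph :: "('a, 'b) graph_scheme \<Rightarrow> bool" where
  "is_graph G \<longleftrightarrow> edges G \<subseteq> verts G \<times> verts G \<and> sym (edges G)"

definition K2 :: "nat graph" where
  "K2 = \<lparr>verts = {0, 1}, edges = {(0, 1), (1, 0)}\<rparr>"

definition graph_hom :: "('a, 'c) graph_scheme \<Rightarrow> ('b, 'd) graph_scheme \<Rightarrow> ('a \<Rightarrow> 'b) \<Rightarrow> bool" where
  "graph_hom G H f \<longleftrightarrow> (\<forall>v\<in>verts G. f v \<in> verts H) \<and>
     (\<forall>(a, b)\<in>edges G. (f a, f b) \<in> edges H)"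

definition is_bigraph :: "'a bigraph \<Rightarrow> bool" where
  "is_bigraph X \<longleftrightarrow> is_graph X \<and> graph_hom X K2 (col X)"

definition bigraph_hom :: "'a bigraph \<Rightarrow> 'b bigraph \<Rightarrow> ('a \<Rightarrow> 'b) \<Rightarrow> bool" where
  "bigraph_hom X Y f \<longleftrightarrow> graph_hom X Y f \<and> (\<forall>v\<in>verts X. col Y (f v) = col X v)"

definition exp_graph :: "'z bigraph \<Rightarrow> 'y bigraph \<Rightarrow> ('y \<Rightarrow> 'z) graph" where
  "exp_graph Z Y =
     (let V = {h. h \<in> verts Y \<rightarrow>\<^sub>E verts Z \<and> (\<forall>a\<in>verts Y. col Z (h a) = col Y a)}
      in \<lparr>verts = V,
          edges = {(h, h'). h \<in> V \<and> h' \<in> V \<and>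
                     (\<forall>(a, a')\<in>edges Y. (h a, h' a') \<in> edges Z)}\<rparr>)"

definition multi_hom :: "('a, 'c) graph_scheme \<Rightarrow> ('b, 'd) graph_scheme \<Rightarrow> ('a \<Rightarrow> 'b set) \<Rightarrow> bool" where
  "multi_hom T H \<eta> \<longleftrightarrow>
     (\<forall>v\<in>verts T. finite (\<eta> v) \<and> \<eta> v \<noteq> {} \<and> \<eta> v \<subseteq> verts H) \<and>
     (\<forall>v. v \<notin> verts T \<longrightarrow> \<eta> v = {}) \<and>
     (\<forall>(v, w)\<in>edges T. \<eta> v \<times> \<eta> w \<subseteq> edges H)"

definition Hom :: "('a, 'c) graph_scheme \<Rightarrow> ('b, 'd) graph_scheme \<Rightarrow> ('a \<Rightarrow> 'b set) set" where
  "Hom T H = {\<eta>. multi_hom T H \<eta>}"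

definition Hom_K2 :: "'a bigraph \<Rightarrow> 'b bigraph \<Rightarrow> ('a \<Rightarrow> 'b set) set" where
  "Hom_K2 X Y = {\<eta> \<in> Hom X Y. \<forall>v\<in>verts X. \<eta> v \<subseteq> {y \<in> verts Y. col Y y = col X v}}"

text \<open>Connected components of a poset (ordered by pointwise inclusion):
  equivalence generated by comparability inside the poset.\<close>
definition same_component :: "('a \<Rightarrow> 'b set) set \<Rightarrow> ('a \<Rightarrow> 'b set) \<Rightarrow> ('a \<Rightarrow> 'b set) \<Rightarrow> bool" where
  "same_component P \<eta> \<eta>' \<longleftrightarrow> \<eta> \<in> P \<and> \<eta>' \<in> P \<and>
     (\<lambda>x y. x \<in> P \<and> y \<in> P \<and> (x \<le> y \<or> y \<le> x))\<^sup>*\<^sup>* \<eta> \<eta>'"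

definition as_multi :: "('a, 'c) graph_scheme \<Rightarrow> ('a \<Rightarrow> 'b) \<Rightarrow> ('a \<Rightarrow> 'b set)" where
  "as_multi T f = (\<lambda>v. if v \<in> verts T then {f v} else {})"

definition times_homotopic :: "'a bigraph \<Rightarrow> 'b bigraph \<Rightarrow> ('a \<Rightarrow> 'b) \<Rightarrow> ('a \<Rightarrow> 'b) \<Rightarrow> bool" where
  "times_homotopic X Y f g \<longleftrightarrow> same_component (Hom_K2 X Y) (as_multi X f) (as_multi X g)"

definition precomp :: "'x bigraph \<Rightarrow> ('x \<Rightarrow> 'y) \<Rightarrow> ('y \<Rightarrow> 'z) \<Rightarrow> ('x \<Rightarrow> 'z)" where
  "precomp X f h = restrict (h \<circ> f) (verts X)"

end

theory Submission
  imports Defs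
begin

text \<open>Any two selections \<open>s\<close>, \<open>t\<close> of one \<open>\<eta> \<in> Hom_K2 X Y\<close> give precompositions \<open>s\<^sup>*\<close>,
  \<open>t\<^sup>*\<close> in the same component of \<open>Hom (Z\<^sup>Y) (Z\<^sup>X)\<close>: the multi-homomorphism
  \<open>h \<mapsto> {h \<circ> s, h \<circ> t}\<close> lies above both. Comparable elements of \<open>Hom_K2 X Y\<close> share a selection
  (any selection of the smaller one), so this connection propagates along a chain of comparable
  multi-homomorphisms from \<open>f\<close> to \<open>g\<close>.\<close>

definition selection :: "('x, 'c) graph_scheme \<Rightarrow> ('x \<Rightarrow> 'y set) \<Rightarrow> ('x \<Rightarrow> 'y) \<Rightarrow> bool" where
  "selection X \<eta> s \<longleftrightarrow> (\<forall>a\<in>verts X. s a \<in> \<eta> a)"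

lemma selection_as_multi: "selection X (as_multi X f) f"
  unfolding selection_def as_multi_def by simp

lemma selection_mono: "selection X \<eta> s \<Longrightarrow> \<eta> \<le> \<eta>' \<Longrightarrow> selection X \<eta>' s"
  unfolding selection_def le_fun_def by blast

lemma selection_some:
  assumes "\<eta> \<in> Hom X Y"
  shows "selection X \<eta> (\<lambda>a. SOME y. y \<in> \<eta> a)"
  using assms unfolding selection_def Hom_def multi_hom_def by (auto intro: some_in_eq[THEN iffD2])

lemma precomp_in_exp_verts:
  assumes "\<eta> \<in> Hom_K2 X Y" "selection X \<eta> s" "h \<in> verts (exp_graph Z Y)"
  shows "precomp X s h \<in> verts (exp_graph Z X)"
proof -
  have "s a \<in> verts Y \<and> col Y (s a) = col X a" if "a \<in> verts X" for a
    using assms(1,2) that unfolding Hom_K2_def selection_def by blast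
  then show ?thesis
    using assms(3) unfolding exp_graph_def precomp_def Let_def by (auto simp: PiE_iff)
qed

lemma precomp_in_exp_edges:
  assumes "is_graph X" "\<eta> \<in> Hom_K2 X Y" "selection X \<eta> s" "selection X \<eta> t"
    and hh': "(h, h') \<in> edges (exp_graph Z Y)"
  shows "(precomp X s h, precomp X t h') \<in> edges (exp_graph Z X)"
proof -
  have h: "h \<in> verts (exp_graph Z Y)" and h': "h' \<in> verts (exp_graph Z Y)"
    and hE: "\<forall>(b, b')\<in>edges Y. (h b, h' b') \<in> edges Z"
    using hh' unfolding exp_graph_def Let_def by auto
  have "(precomp X s h a, precomp X t h' a') \<in> edges Z" if aa': "(a, a') \<in> edges X" for a a'
  proof -
    have a: "a \<in> verts X" and a': "a' \<in> verts X"
      using assms(1) aa' unfolding is_graph_def by auto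
    have "\<eta> a \<times> \<eta> a' \<subseteq> edges Y"
      using assms(2) aa' unfolding Hom_K2_def Hom_def multi_hom_def by blast
    with assms(3,4) a a' have "(s a, t a') \<in> edges Y"
      unfolding selection_def by blast
    with hE a a' show ?thesis unfolding precomp_def by auto
  qed
  with precomp_in_exp_verts[OF assms(2,3) h] precomp_in_exp_verts[OF assms(2,4) h']
  show ?thesis unfolding exp_graph_def Let_def by auto
qed

definition precomp_pair ::
    "'z bigraph \<Rightarrow> 'y bigraph \<Rightarrow> 'x bigraph \<Rightarrow> ('x \<Rightarrow> 'y) \<Rightarrow> ('x \<Rightarrow> 'y) \<Rightarrow> ('y \<Rightarrow> 'z) \<Rightarrow> ('x \<Rightarrow> 'z) set"
  where "precomp_pair Z Y X s t h =
    (if h \<in> verts (exp_graph Z Y) then {precomp X s h, precomp X t h} else {})"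

lemma as_multi_precomp_eq_precomp_pair:
  "as_multi (exp_graph Z Y) (precomp X s) = precomp_pair Z Y X s s"
  unfolding as_multi_def precomp_pair_def by (rule ext) simp

lemma precomp_pair_le: "precomp_pair Z Y X s s \<le> precomp_pair Z Y X s t"
  "precomp_pair Z Y X t t \<le> precomp_pair Z Y X s t"
  unfolding precomp_pair_def le_fun_def by auto

lemma precomp_pair_in_Hom:
  assumes "is_graph X" "\<eta> \<in> Hom_K2 X Y" "selection X \<eta> s" "selection X \<eta> t"
  shows "precomp_pair Z Y X s t \<in> Hom (exp_graph Z Y) (exp_graph Z X)"
  unfolding Hom_def multi_hom_def
proof (intro CollectI conjI ballI allI impI)
  fix h assume "h \<in> verts (exp_graph Z Y)"
  then show "finite (precomp_pair Z Y X s t h)" "precomp_pair Z Y X s t h \<noteq> {}"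
    "precomp_pair Z Y X s t h \<subseteq> verts (exp_graph Z X)"
    using precomp_in_exp_verts[OF assms(2,3)] precomp_in_exp_verts[OF assms(2,4)]
    unfolding precomp_pair_def by auto
next
  fix h assume "h \<notin> verts (exp_graph Z Y)"
  then show "precomp_pair Z Y X s t h = {}" unfolding precomp_pair_def by simp
next
  fix p assume p: "p \<in> edges (exp_graph Z Y)"
  obtain h h' where [simp]: "p = (h, h')" by fastforce
  have "h \<in> verts (exp_graph Z Y)" "h' \<in> verts (exp_graph Z Y)"
    using p unfolding exp_graph_def Let_def by auto
  with p show "case p of (v, w) \<Rightarrow>
      precomp_pair Z Y X s t v \<times> precomp_pair Z Y X s t w \<subseteq> edges (exp_graph Z X)"
    using precomp_in_exp_edges[OF assms(1,2)] assms(3,4) unfolding precomp_pair_def by auto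
qed

lemma same_component_sym: "same_component P a b \<Longrightarrow> same_component P b a"
proof -
  have "symp (\<lambda>x y. x \<in> P \<and> y \<in> P \<and> (x \<le> y \<or> y \<le> x))"
    by (auto simp: symp_def)
  then show "same_component P a b \<Longrightarrow> same_component P b a"
    unfolding same_component_def by (auto dest: sympD[OF symp_rtranclp])
qed

lemma same_component_trans:
  "same_component P a b \<Longrightarrow> same_component P b c \<Longrightarrow> same_component P a c"
  unfolding same_component_def by auto

lemma same_component_image:
  assumes F: "\<And>x y. x \<in> P \<Longrightarrow> y \<in> P \<Longrightarrow> x \<le> y \<Longrightarrow> same_component Q (F x) (F y)"
    and ab: "same_component P a b"
  shows "same_component Q (F a) (F b)"
proof -
  have "(\<lambda>x y. x \<in> P \<and> y \<in> P \<and> (x \<le> y \<or> y \<le> x))\<^sup>*\<^sup>* a b" and a: "a \<in> P"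
    using ab unfolding same_component_def by auto
  then show ?thesis
  proof (induction rule: rtranclp_induct)
    case base
    show ?case using F[OF a a] by simp
  next
    case (step y z)
    then have "same_component Q (F y) (F z)"
      using F same_component_sym by blast
    with step show ?case using same_component_trans by blast
  qed
qed

lemma same_component_precomp_selections:
  assumes "is_graph X" "\<eta> \<in> Hom_K2 X Y" "selection X \<eta> s" "selection X \<eta> t"
  shows "same_component (Hom (exp_graph Z Y) (exp_graph Z X))
           (as_multi (exp_graph Z Y) (precomp X s)) (as_multi (exp_graph Z Y) (precomp X t))"
proof -
  let ?P = "Hom (exp_graph Z Y) (exp_graph Z X)"
  have ss: "precomp_pair Z Y X s s \<in> ?P" and st: "precomp_pair Z Y X s t \<in> ?P"
    and tt: "precomp_pair Z Y X t t \<in> ?P"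
    using precomp_pair_in_Hom[OF assms(1,2)] assms(3,4) by blast+
  have "(\<lambda>x y. x \<in> ?P \<and> y \<in> ?P \<and> (x \<le> y \<or> y \<le> x))\<^sup>*\<^sup>*
      (precomp_pair Z Y X s s) (precomp_pair Z Y X t t)"
    using ss st tt precomp_pair_le
    by (blast intro: rtranclp.rtrancl_into_rtrancl r_into_rtranclp)
  with ss tt show ?thesis
    unfolding same_component_def as_multi_precomp_eq_precomp_pair by blast
qed

theorem lemma3p7:
  fixes X :: "'x bigraph" and Y :: "'y bigraph" and Z :: "'z bigraph"
    and f g :: "'x \<Rightarrow> 'y"
  assumes "is_bigraph X" and "is_bigraph Y" and "is_bigraph Z"
    and "bigraph_hom X Y f" and "bigraph_hom X Y g"
    and "times_homotopic X Y f g"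
  shows "same_component (Hom (exp_graph Z Y) (exp_graph Z X))
           (as_multi (exp_graph Z Y) (precomp X f))
           (as_multi (exp_graph Z Y) (precomp X g))"
proof -
  have X: "is_graph X" using assms(1) unfolding is_bigraph_def by simp
  define choice :: "('x \<Rightarrow> 'y set) \<Rightarrow> 'x \<Rightarrow> 'y" where "choice \<eta> a = (SOME y. y \<in> \<eta> a)" for \<eta> a
  let ?A = "\<lambda>s. as_multi (exp_graph Z Y) (precomp X s)"
  have choice: "selection X \<eta> (choice \<eta>)" if "\<eta> \<in> Hom_K2 X Y" for \<eta>
    using selection_some that unfolding choice_def Hom_K2_def by blast
  have fg: "same_component (Hom_K2 X Y) (as_multi X f) (as_multi X g)"
    using assms(6) unfolding times_homotopic_def .
  then have "as_multi X f \<in> Hom_K2 X Y" "as_multi X g \<in> Hom_K2 X Y"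
    unfolding same_component_def by auto
  then have "same_component (Hom (exp_graph Z Y) (exp_graph Z X)) (?A f) (?A (choice (as_multi X f)))"
    "same_component (Hom (exp_graph Z Y) (exp_graph Z X)) (?A (choice (as_multi X g))) (?A g)"
    using same_component_precomp_selections[OF X] choice selection_as_multi by blast+
  moreover have "same_component (Hom (exp_graph Z Y) (exp_graph Z X))
      (?A (choice (as_multi X f))) (?A (choice (as_multi X g)))"
  proof (rule same_component_image[OF _ fg])
    fix \<eta> \<eta>' assume "\<eta> \<in> Hom_K2 X Y" "\<eta>' \<in> Hom_K2 X Y" "\<eta> \<le> \<eta>'"
    then show "same_component (Hom (exp_graph Z Y) (exp_graph Z X)) (?A (choice \<eta>)) (?A (choice \<eta>'))"
      using same_component_precomp_selections[OF X _ selection_mono choice] choice by blast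
  qed
  ultimately show ?thesis using same_component_trans by blast
qed

end
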